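(* Let $C\subset\mathbb R^3$ be a non-closed embedded curve of length $l>0$ with nowhere vanishing curvature and arc-length parametrization $\mathbf c:[-l/2,l/2]\to\mathbb R^3$ inducing its orientation. Let $F\in\mathcal D_*(C)$ be a normal form with $F(s,0)=\mathbf c(s)$, and let $T$ be a non-trivial symmetry of $C$. Then: (1) if $T$ is a positive symmetry, then $T\circ F=F_*$; moreover, if $\mu_F$ has a symmetry, then $T\circ F(-s,v)=\check F(s,v)$; (2) if $T$ is a negative symmetry, then $T\circ F=\check F_*$; moreover, if $\mu_F$ has a symmetry, then $T\circ F(-s,v)=F(s,v)$.
   Context: $-C$ denotes $C$ with reversed orientation. For a regular parametrization $\mathbf c_f$ of $C$: curvature $\kappa_f$, torsion $\tau_f$, Frenet frame $(\mathbf e,\mathbf n,\mathbf b)$; $\kappa$ is the curvature of $\mathbf c$. A developable strip along $C$ is the germ along $C$ of a $C^\infty$ embedding $f(u,v)=f(u,0)+v\,\xi_f(u)$ with $\mathbf c_f(u):=f(u,0)$ parametrizing $C$, $\xi_f$ unit, and zero Gaussian curvature; write $\xi_f=\cos\beta_f\,\mathbf e+\sin\beta_f(\cos\alpha_f\,\mathbf n+\sin\alpha_f\,\mathbf b)$. $\mathcal D(C)$: such strips with $\mathbf c_f$ inducing the orientation of $C$ and $0<|\cos\alpha_f|<1$, normalized by $0<|\alpha_f|<\pi/2$ (first angular function), $0<\beta_f<\pi$. Geodesic curvature $\mu_f=\kappa_f\cos\alpha_f$; admissible ($\in\mathcal D_*(C)$) if $\mu_f<\min\kappa_f$ everywhere.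 A normal form is a strip $F(s,v)$ defined near $[-l/2,l/2]\times\{0\}$ with $s\mapsto F(s,0)$ an arc-length parametrization of $C$ (of either orientation); a normal form is determined by that parametrization and its first angular function $\alpha$ (since zero Gaussian curvature means $\cot\beta=(\alpha'+\tau)/(\kappa\sin\alpha)$), and every smooth $\alpha$ with values in $(-\pi/2,\pi/2)\setminus\{0\}$ occurs. Dual: $\check F$ is the normal form with $\check F(s,0)=F(s,0)$ and first angular function $-\alpha_F$. Inverse: $F_*\in\mathcal D_*(-C)$ is the normal form with $F_*(s,0)=\mathbf c(-s)$ whose first angular function (w.r.t. the Frenet frame of $s\mapsto\mathbf c(-s)$) has the same sign as $\alpha_F(s)$ and satisfies $\kappa(-s)\cos\alpha_{F_*}(s)=\kappa(s)\cos\alpha_F(s)$; the inverse dual $\check F_*$ is the dual of $F_*$. A function $\mu$ on $[-l/2,l/2]$ has a symmetry if $\mu(-s)=\mu(s)$ for all $s$. A symmetry of $C$ is an isometry $T\ne\mathrm{id}$ of $\mathbb R^3$ with $T(C)=C$; it is non-trivial if $T(\mathbf x)\ne\mathbf x$ for some $\mathbf x\in C$, and positive (resp. negative) if $T$ preserves (resp. reverses) the orientation of $\mathbb R^3$. *)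

theory Defs
  imports "HOL-Analysis.Analysis"
begin

definition vd :: "(real \<Rightarrow> 'a::real_normed_vector) \<Rightarrow> real \<Rightarrow> 'a" where
  "vd f t = vector_derivative f (at t)"

definition smooth_fn :: "(real \<Rightarrow> 'a::real_normed_vector) \<Rightarrow> bool" where
  "smooth_fn f \<longleftrightarrow> (\<forall>k x. ((vd ^^ k) f) differentiable (at x))"

definition tangent :: "(real \<Rightarrow> real^3) \<Rightarrow> real \<Rightarrow> real^3" where
  "tangent c s = vd c s"
definition curvature :: "(real \<Rightarrow> real^3) \<Rightarrow> real \<Rightarrow> real" where
  "curvature c s = norm (vd (vd c) s)"
definition principal_normal :: "(real \<Rightarrow> real^3) \<Rightarrow> real \<Rightarrow> real^3" where
  "principal_normal c s = (1 / curvature c s) *\<^sub>R vd (vd c) s"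
definition binormal :: "(real \<Rightarrow> real^3) \<Rightarrow> real \<Rightarrow> real^3" where
  "binormal c s = cross3 (tangent c s) (principal_normal c s)"
definition torsion :: "(real \<Rightarrow> real^3) \<Rightarrow> real \<Rightarrow> real" where
  "torsion c s = vd (principal_normal c) s \<bullet> binormal c s"

definition arccot :: "real \<Rightarrow> real" where
  "arccot x = pi / 2 - arctan x"

definition beta_fn :: "(real \<Rightarrow> real^3) \<Rightarrow> (real \<Rightarrow> real) \<Rightarrow> real \<Rightarrow> real" where
  "beta_fn c \<alpha> s = arccot ((vd \<alpha> s + torsion c s) / (curvature c s * sin (\<alpha> s)))"

definition ruling :: "(real \<Rightarrow> real^3) \<Rightarrow> (real \<Rightarrow> real) \<Rightarrow> real \<Rightarrow> real^3" where
  "ruling c \<alpha> s = cos (beta_fn c \<alpha> s) *\<^sub>R tangent c s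
     + sin (beta_fn c \<alpha> s) *\<^sub>R (cos (\<alpha> s) *\<^sub>R principal_normal c s
                                  + sin (\<alpha> s) *\<^sub>R binormal c s)"

definition normal_form :: "(real \<Rightarrow> real^3) \<Rightarrow> (real \<Rightarrow> real) \<Rightarrow> real \<Rightarrow> real \<Rightarrow> real^3" where
  "normal_form c \<alpha> s v = c s + v *\<^sub>R ruling c \<alpha> s"

definition interv :: "real \<Rightarrow> real set" where
  "interv l = {-l/2 .. l/2}"

definition arclength_curve :: "real \<Rightarrow> (real \<Rightarrow> real^3) \<Rightarrow> bool" where
  "arclength_curve l c \<longleftrightarrow> l > 0 \<and> smooth_fn c \<and> inj_on c (interv l)
     \<and> (\<forall>s\<in>interv l. norm (vd c s) = 1) \<and> (\<forall>s\<in>interv l. curvature c s \<noteq> 0)"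

definition geod_curv :: "(real \<Rightarrow> real^3) \<Rightarrow> (real \<Rightarrow> real) \<Rightarrow> real \<Rightarrow> real" where
  "geod_curv c \<alpha> s = curvature c s * cos (\<alpha> s)"

definition admissible_angle :: "real \<Rightarrow> (real \<Rightarrow> real^3) \<Rightarrow> (real \<Rightarrow> real) \<Rightarrow> bool" where
  "admissible_angle l c \<alpha> \<longleftrightarrow> smooth_fn \<alpha>
     \<and> (\<forall>s\<in>interv l. -pi/2 < \<alpha> s \<and> \<alpha> s < pi/2 \<and> \<alpha> s \<noteq> 0)
     \<and> (\<forall>s\<in>interv l. geod_curv c \<alpha> s < (INF t\<in>interv l. curvature c t))"

definition dual_nf :: "(real \<Rightarrow> real^3) \<Rightarrow> (real \<Rightarrow> real) \<Rightarrow> real \<Rightarrow> real \<Rightarrow> real^3" where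
  "dual_nf c \<alpha> = normal_form c (\<lambda>s. - \<alpha> s)"

text \<open>First angular function of the inverse: same sign as alpha(s) and
  kappa(-s) cos alpha_*(s) = kappa(s) cos alpha(s).\<close>
definition alpha_inv :: "(real \<Rightarrow> real^3) \<Rightarrow> (real \<Rightarrow> real) \<Rightarrow> real \<Rightarrow> real" where
  "alpha_inv c \<alpha> s = sgn (\<alpha> s) * arccos (curvature c s * cos (\<alpha> s) / curvature c (-s))"

definition inverse_nf :: "(real \<Rightarrow> real^3) \<Rightarrow> (real \<Rightarrow> real) \<Rightarrow> real \<Rightarrow> real \<Rightarrow> real^3" where
  "inverse_nf c \<alpha> = normal_form (\<lambda>s. c (-s)) (alpha_inv c \<alpha>)"

definition inverse_dual_nf :: "(real \<Rightarrow> real^3) \<Rightarrow> (real \<Rightarrow> real) \<Rightarrow> real \<Rightarrow> real \<Rightarrow> real^3" where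
  "inverse_dual_nf c \<alpha> = dual_nf (\<lambda>s. c (-s)) (alpha_inv c \<alpha>)"

definition isometry3 :: "(real^3 \<Rightarrow> real^3) \<Rightarrow> bool" where
  "isometry3 T \<longleftrightarrow> (\<forall>x y. dist (T x) (T y) = dist x y)"

definition symmetry_of :: "(real^3 \<Rightarrow> real^3) \<Rightarrow> (real^3) set \<Rightarrow> bool" where
  "symmetry_of T C \<longleftrightarrow> isometry3 T \<and> T \<noteq> id \<and> T ` C = C"

definition nontrivial_symmetry :: "(real^3 \<Rightarrow> real^3) \<Rightarrow> (real^3) set \<Rightarrow> bool" where
  "nontrivial_symmetry T C \<longleftrightarrow> symmetry_of T C \<and> (\<exists>x\<in>C. T x \<noteq> x)"

definition positive_isom :: "(real^3 \<Rightarrow> real^3) \<Rightarrow> bool" where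
  "positive_isom T \<longleftrightarrow> det (matrix (\<lambda>x. T x - T 0)) > 0"
definition negative_isom :: "(real^3 \<Rightarrow> real^3) \<Rightarrow> bool" where
  "negative_isom T \<longleftrightarrow> det (matrix (\<lambda>x. T x - T 0)) < 0"

definition has_symmetry :: "real \<Rightarrow> (real \<Rightarrow> real) \<Rightarrow> bool" where
  "has_symmetry l \<mu> \<longleftrightarrow> (\<forall>s\<in>interv l. \<mu> (-s) = \<mu> s)"

end

(*
  The map phi = c^-1 o T o c of [-l/2, l/2] to itself preserves the chord lengths of the
  unit-speed curve c, so the difference quotients of phi have modulus tending to 1; being
  continuous and injective, phi is monotone, hence affine of slope +-1, i.e. the identity or
  s |-> -s, and non-triviality of T rules out the identity.  Thus c(-s) = L c(s) + T 0 with L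
  the linear part of T, and comparing the Frenet apparatus of both sides gives
  e(-s) = -L e(s), n(-s) = L n(s), b(-s) = -(det L) L b(s), kappa(-s) = kappa(s) and
  tau(-s) = (det L) tau(s).  Since kappa is even, the first angular function of F_* is alpha
  itself, and when mu is even so is alpha.  The image under L of the ruling of F is then the
  ruling of F_*, of its dual, of the dual of F or of F itself, according to det L = +-1 and to
  whether s or -s is used.
*)
theory Submission
  imports Defs
begin

section \<open>Derivatives of reflected and affinely transformed functions\<close>

lemma has_vector_derivative_vd:
  "f differentiable (at x) \<Longrightarrow> (f has_vector_derivative vd f x) (at x)"
  by (simp add: vd_def vector_derivative_works[symmetric])

lemma vd_eqI: "(f has_vector_derivative f') (at x) \<Longrightarrow> vd f x = f'"
  by (simp add: vd_def vector_derivative_at)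

lemma smooth_fn_differentiable: "smooth_fn f \<Longrightarrow> f differentiable (at x)"
  unfolding smooth_fn_def by (drule spec[of _ 0]) simp

lemma smooth_fn_vd: "smooth_fn f \<Longrightarrow> smooth_fn (vd f)"
  unfolding smooth_fn_def by (metis funpow_Suc_right o_apply)

lemma smooth_fn_continuous_on: "smooth_fn f \<Longrightarrow> continuous_on S f"
  by (meson continuous_at_imp_continuous_on differentiable_imp_continuous_within
        smooth_fn_differentiable)

lemma has_vector_derivative_reflect:
  "(f has_vector_derivative f') (at (-s)) \<Longrightarrow> ((\<lambda>t. f (-t)) has_vector_derivative - f') (at s)"
  using vector_diff_chain_at[of uminus "-1" s f f']
    has_vector_derivative_minus[OF has_vector_derivative_id]
  by (simp add: o_def)

lemma differentiable_reflect:
  "f differentiable (at (- s)) \<Longrightarrow> (\<lambda>t. f (- t)) differentiable (at (s::real))"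
  by (rule differentiableI_vector[OF has_vector_derivative_reflect[OF has_vector_derivative_vd]])

lemma vd_reflect: "f differentiable (at (-s)) \<Longrightarrow> vd (\<lambda>t. f (-t)) s = - vd f (-s)"
  by (rule vd_eqI, rule has_vector_derivative_reflect, erule has_vector_derivative_vd)

lemma vd_linear_image:
  "bounded_linear L \<Longrightarrow> f differentiable (at s) \<Longrightarrow> vd (\<lambda>t. L (f t)) s = L (vd f s)"
  by (rule vd_eqI, erule bounded_linear.has_vector_derivative, erule has_vector_derivative_vd)

lemma vd_scaleR_right: "f differentiable (at s) \<Longrightarrow> vd (\<lambda>t. r *\<^sub>R f t) s = r *\<^sub>R vd f s"
  by (rule vd_linear_image[OF bounded_linear_scaleR_right])

lemma vd_affine_image:
  "bounded_linear L \<Longrightarrow> f differentiable (at s) \<Longrightarrow> vd (\<lambda>t. L (f t) + p) s = L (vd f s)"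
  by (rule vd_eqI, subst has_vector_derivative_add_const,
      erule bounded_linear.has_vector_derivative, erule has_vector_derivative_vd)

lemma vd_cong_interval:
  fixes f g :: "real \<Rightarrow> 'a::euclidean_space"
  assumes "f differentiable (at x)" "g differentiable (at x)" "a < b" "x \<in> {a..b}"
    and "\<And>y. y \<in> {a..b} \<Longrightarrow> f y = g y"
  shows "vd f x = vd g x"
proof -
  have "(g has_vector_derivative vd f x) (at x within {a..b})"
    by (rule has_vector_derivative_transform[OF assms(4) _
          has_vector_derivative_at_within[OF has_vector_derivative_vd[OF assms(1)]]])
      (simp add: assms(5))
  moreover have "(g has_vector_derivative vd g x) (at x within {a..b})"
    by (rule has_vector_derivative_at_within[OF has_vector_derivative_vd[OF assms(2)]])
  ultimately show ?thesis
    using vector_derivative_unique_within_closed_interval[OF assms(3)] assms(4)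
    unfolding cbox_interval by blast
qed

lemma differentiable_linear_image:
  "bounded_linear L \<Longrightarrow> f differentiable (at x) \<Longrightarrow> (\<lambda>t. L (f t)) differentiable (at x)"
  by (rule differentiable_compose[OF bounded_linear_imp_differentiable])

lemma funpow_vd_reflect:
  "smooth_fn f \<Longrightarrow> (vd ^^ k) (\<lambda>t. f (- t)) = (\<lambda>t. (-1) ^ k *\<^sub>R (vd ^^ k) f (- t))"
proof (induction k)
  case 0
  show ?case by simp
next
  case (Suc k)
  have step: "vd (\<lambda>t. (-1) ^ k *\<^sub>R (vd ^^ k) f (- t)) s = (-1) ^ Suc k *\<^sub>R (vd ^^ Suc k) f (- s)"
    for s
  proof -
    have d: "(vd ^^ k) f differentiable (at (- s))"
      using Suc.prems unfolding smooth_fn_def by blast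
    show ?thesis
      unfolding vd_scaleR_right[OF differentiable_reflect[OF d]] vd_reflect[OF d] by simp
  qed
  have "(vd ^^ Suc k) (\<lambda>t. f (- t)) = vd (\<lambda>t. (-1) ^ k *\<^sub>R (vd ^^ k) f (- t))"
    by (simp only: funpow.simps o_apply Suc.IH[OF Suc.prems])
  also have "\<dots> = (\<lambda>s. (-1) ^ Suc k *\<^sub>R (vd ^^ Suc k) f (- s))"
    using step by (rule ext)
  finally show ?case .
qed

lemma smooth_fn_reflect:
  assumes "smooth_fn f"
  shows "smooth_fn (\<lambda>t. f (- t))"
  unfolding smooth_fn_def funpow_vd_reflect[OF assms]
proof (intro allI)
  fix k x
  have "(vd ^^ k) f differentiable (at (- x))"
    using assms unfolding smooth_fn_def by blast
  then show "(\<lambda>t. (-1) ^ k *\<^sub>R (vd ^^ k) f (- t)) differentiable (at x)"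
    by (rule differentiable_linear_image[OF bounded_linear_scaleR_right differentiable_reflect])
qed

lemma funpow_vd_affine_image:
  assumes "bounded_linear L" "smooth_fn f"
  shows "(vd ^^ Suc k) (\<lambda>t. L (f t) + p) = (\<lambda>t. L ((vd ^^ Suc k) f t))"
proof (induction k)
  case 0
  show ?case
    using vd_affine_image[OF assms(1) smooth_fn_differentiable[OF assms(2)]] by auto
next
  case (Suc k)
  have d: "(vd ^^ Suc k) f differentiable (at s)" for s
    using assms(2) unfolding smooth_fn_def by blast
  have "(vd ^^ Suc (Suc k)) (\<lambda>t. L (f t) + p) = vd ((vd ^^ Suc k) (\<lambda>t. L (f t) + p))"
    by simp
  also have "\<dots> = vd (\<lambda>t. L ((vd ^^ Suc k) f t))"
    unfolding Suc.IH ..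
  also have "\<dots> = (\<lambda>t. L ((vd ^^ Suc (Suc k)) f t))"
    using vd_linear_image[OF assms(1) d] by auto
  finally show ?case .
qed

lemma smooth_fn_affine_image:
  assumes "bounded_linear L" "smooth_fn f"
  shows "smooth_fn (\<lambda>t. L (f t) + p)"
  unfolding smooth_fn_def
proof (intro allI)
  fix k x
  show "(vd ^^ k) (\<lambda>t. L (f t) + p) differentiable (at x)"
  proof (cases k)
    case 0
    then show ?thesis
      using differentiable_linear_image[OF assms(1) smooth_fn_differentiable[OF assms(2)]] by simp
  next
    case (Suc k')
    have "(vd ^^ Suc k') f differentiable (at x)"
      using assms(2) unfolding smooth_fn_def by blast
    then show ?thesis
      unfolding Suc funpow_vd_affine_image[OF assms]
      by (rule differentiable_linear_image[OF assms(1)])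
  qed
qed

section \<open>Frenet apparatus under reflection and rigid motion\<close>

lemma curvature_differentiable:
  assumes "smooth_fn c" "curvature c s \<noteq> 0"
  shows "curvature c differentiable (at s)"
proof -
  have "vd (vd c) s \<noteq> 0"
    using assms(2) by (simp add: curvature_def)
  then have "(\<lambda>t. norm (vd (vd c) t)) differentiable (at s)"
    by (rule differentiable_compose[OF differentiable_norm_at
          smooth_fn_differentiable[OF smooth_fn_vd[OF smooth_fn_vd[OF assms(1)]]]])
  then show ?thesis
    unfolding curvature_def[abs_def] .
qed

lemma principal_normal_differentiable:
  assumes "smooth_fn c" "curvature c s \<noteq> 0"
  shows "principal_normal c differentiable (at s)"
  unfolding principal_normal_def[abs_def]
  by (rule differentiable_scaleR[OF differentiable_divide[OF differentiable_const
        curvature_differentiable[OF assms] assms(2)]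
        smooth_fn_differentiable[OF smooth_fn_vd[OF smooth_fn_vd[OF assms(1)]]]])

lemma vd_reflect_smooth: "smooth_fn c \<Longrightarrow> vd (\<lambda>t. c (- t)) = (\<lambda>t. - vd c (- t))"
  using funpow_vd_reflect[of c 1] by simp

lemma vd_vd_reflect_smooth: "smooth_fn c \<Longrightarrow> vd (vd (\<lambda>t. c (- t))) = (\<lambda>t. vd (vd c) (- t))"
  using funpow_vd_reflect[of c "Suc (Suc 0)"] by simp

context
  fixes c :: "real \<Rightarrow> real^3"
  assumes smooth: "smooth_fn c"
begin

lemma tangent_reflect: "tangent (\<lambda>t. c (- t)) s = - tangent c (- s)"
  by (simp add: tangent_def vd_reflect_smooth[OF smooth])

lemma curvature_reflect: "curvature (\<lambda>t. c (- t)) s = curvature c (- s)"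
  by (simp add: curvature_def vd_vd_reflect_smooth[OF smooth])

lemma principal_normal_reflect: "principal_normal (\<lambda>t. c (- t)) = (\<lambda>t. principal_normal c (- t))"
  by (simp add: fun_eq_iff principal_normal_def curvature_reflect vd_vd_reflect_smooth[OF smooth])

lemma binormal_reflect: "binormal (\<lambda>t. c (- t)) s = - binormal c (- s)"
  by (simp add: binormal_def tangent_reflect principal_normal_reflect)

lemma torsion_reflect:
  assumes "curvature c (- s) \<noteq> 0"
  shows "torsion (\<lambda>t. c (- t)) s = torsion c (- s)"
proof -
  have "vd (principal_normal (\<lambda>t. c (- t))) s = - vd (principal_normal c) (- s)"
    unfolding principal_normal_reflect
    by (rule vd_reflect[OF principal_normal_differentiable[OF smooth assms]])
  then show ?thesis
    by (simp add: torsion_def binormal_reflect)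
qed

end

lemma orthogonal_transformation_bounded_linear:
  fixes L :: "'a::euclidean_space \<Rightarrow> 'a"
  shows "orthogonal_transformation L \<Longrightarrow> bounded_linear L"
  by (rule linear_conv_bounded_linear[THEN iffD1, OF orthogonal_transformation_linear])

context
  fixes c :: "real \<Rightarrow> real^3" and L :: "real^3 \<Rightarrow> real^3" and p :: "real^3"
  assumes smooth: "smooth_fn c" and orth: "orthogonal_transformation L"
begin

lemma vd_rigid_motion: "vd (\<lambda>t. L (c t) + p) = (\<lambda>t. L (vd c t))"
  using funpow_vd_affine_image[OF orthogonal_transformation_bounded_linear[OF orth] smooth, of 0]
  by simp

lemma vd_vd_rigid_motion: "vd (vd (\<lambda>t. L (c t) + p)) = (\<lambda>t. L (vd (vd c) t))"
  using funpow_vd_affine_image[OF orthogonal_transformation_bounded_linear[OF orth] smooth,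
      of "Suc 0"]
  by simp

lemma tangent_rigid_motion: "tangent (\<lambda>t. L (c t) + p) s = L (tangent c s)"
  by (simp add: tangent_def vd_rigid_motion)

lemma curvature_rigid_motion: "curvature (\<lambda>t. L (c t) + p) s = curvature c s"
  by (simp add: curvature_def vd_vd_rigid_motion orthogonal_transformation_norm[OF orth])

lemma principal_normal_rigid_motion:
  "principal_normal (\<lambda>t. L (c t) + p) = (\<lambda>t. L (principal_normal c t))"
  using orth
  by (simp add: fun_eq_iff principal_normal_def curvature_rigid_motion vd_vd_rigid_motion
      orthogonal_transformation linear_cmul)

lemma binormal_rigid_motion:
  "binormal (\<lambda>t. L (c t) + p) s = det (matrix L) *\<^sub>R L (binormal c s)"
  by (simp add: binormal_def tangent_rigid_motion principal_normal_rigid_motion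
      cross_orthogonal_transformation[OF orth])

lemma torsion_rigid_motion:
  "curvature c s \<noteq> 0 \<Longrightarrow> torsion (\<lambda>t. L (c t) + p) s = det (matrix L) * torsion c s"
  using orth
  by (simp add: torsion_def principal_normal_rigid_motion binormal_rigid_motion
      vd_linear_image[OF orthogonal_transformation_bounded_linear[OF orth]
        principal_normal_differentiable[OF smooth]]
      orthogonal_transformation_def)

end

context
  fixes c d :: "real \<Rightarrow> real^3" and a b :: real
  assumes smooth: "smooth_fn c" "smooth_fn d" and ab: "a < b"
    and agree: "\<And>t. t \<in> {a..b} \<Longrightarrow> c t = d t"
begin

lemma tangent_cong_interval: "s \<in> {a..b} \<Longrightarrow> tangent c s = tangent d s"
  unfolding tangent_def
  by (rule vd_cong_interval[OF smooth_fn_differentiable[OF smooth(1)]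
        smooth_fn_differentiable[OF smooth(2)] ab _ agree])

lemma vd_vd_cong_interval: "s \<in> {a..b} \<Longrightarrow> vd (vd c) s = vd (vd d) s"
  by (rule vd_cong_interval[OF smooth_fn_differentiable[OF smooth_fn_vd[OF smooth(1)]]
        smooth_fn_differentiable[OF smooth_fn_vd[OF smooth(2)]] ab _
        tangent_cong_interval[unfolded tangent_def]])

lemma curvature_cong_interval: "s \<in> {a..b} \<Longrightarrow> curvature c s = curvature d s"
  by (simp add: curvature_def vd_vd_cong_interval)

lemma principal_normal_cong_interval: "s \<in> {a..b} \<Longrightarrow> principal_normal c s = principal_normal d s"
  by (simp add: principal_normal_def curvature_cong_interval vd_vd_cong_interval)

lemma binormal_cong_interval: "s \<in> {a..b} \<Longrightarrow> binormal c s = binormal d s"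
  by (simp add: binormal_def tangent_cong_interval principal_normal_cong_interval)

lemma torsion_cong_interval:
  assumes "s \<in> {a..b}" "curvature c s \<noteq> 0"
  shows "torsion c s = torsion d s"
proof -
  have "curvature d s \<noteq> 0"
    using assms curvature_cong_interval by simp
  then have "vd (principal_normal c) s = vd (principal_normal d) s"
    by (rule vd_cong_interval[OF principal_normal_differentiable[OF smooth(1) assms(2)]
          principal_normal_differentiable[OF smooth(2)] ab assms(1) principal_normal_cong_interval])
  then show ?thesis
    using assms(1) by (simp add: torsion_def binormal_cong_interval)
qed

end

context
  fixes c :: "real \<Rightarrow> real^3" and L :: "real^3 \<Rightarrow> real^3" and p :: "real^3" and a b :: real
  assumes smooth: "smooth_fn c" and orth: "orthogonal_transformation L" and ab: "a < b"
    and mirror: "\<And>t. t \<in> {a..b} \<Longrightarrow> c (- t) = L (c t) + p"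
begin

lemma smooth_mirror_sides: "smooth_fn (\<lambda>t. c (- t))" "smooth_fn (\<lambda>t. L (c t) + p)"
  using smooth_fn_reflect[OF smooth]
    smooth_fn_affine_image[OF orthogonal_transformation_bounded_linear[OF orth] smooth] .

lemma tangent_mirror:
  assumes "s \<in> {a..b}"
  shows "tangent c (- s) = - L (tangent c s)"
proof -
  have "tangent (\<lambda>t. c (- t)) s = tangent (\<lambda>t. L (c t) + p) s"
    using smooth_mirror_sides ab mirror assms by (rule tangent_cong_interval)
  then show ?thesis
    unfolding tangent_reflect[OF smooth] tangent_rigid_motion[OF smooth orth] by (metis minus_minus)
qed

lemma curvature_mirror:
  assumes "s \<in> {a..b}"
  shows "curvature c (- s) = curvature c s"
proof -
  have "curvature (\<lambda>t. c (- t)) s = curvature (\<lambda>t. L (c t) + p) s"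
    using smooth_mirror_sides ab mirror assms by (rule curvature_cong_interval)
  then show ?thesis
    unfolding curvature_reflect[OF smooth] curvature_rigid_motion[OF smooth orth] .
qed

lemma principal_normal_mirror:
  assumes "s \<in> {a..b}"
  shows "principal_normal c (- s) = L (principal_normal c s)"
proof -
  have "principal_normal (\<lambda>t. c (- t)) s = principal_normal (\<lambda>t. L (c t) + p) s"
    using smooth_mirror_sides ab mirror assms by (rule principal_normal_cong_interval)
  then show ?thesis
    unfolding principal_normal_reflect[OF smooth] principal_normal_rigid_motion[OF smooth orth] .
qed

lemma binormal_mirror:
  assumes "s \<in> {a..b}"
  shows "binormal c (- s) = - det (matrix L) *\<^sub>R L (binormal c s)"
proof -
  have "binormal (\<lambda>t. c (- t)) s = binormal (\<lambda>t. L (c t) + p) s"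
    using smooth_mirror_sides ab mirror assms by (rule binormal_cong_interval)
  then show ?thesis
    unfolding binormal_reflect[OF smooth] binormal_rigid_motion[OF smooth orth]
    by (metis minus_minus scaleR_minus_left)
qed

lemma torsion_mirror:
  assumes "s \<in> {a..b}" "curvature c s \<noteq> 0"
  shows "torsion c (- s) = det (matrix L) * torsion c s"
proof -
  have "curvature (\<lambda>t. L (c t) + p) s \<noteq> 0"
    using assms(2) by (simp add: curvature_rigid_motion[OF smooth orth])
  then have "torsion (\<lambda>t. L (c t) + p) s = torsion (\<lambda>t. c (- t)) s"
    using smooth_mirror_sides(2,1) ab mirror[symmetric] assms(1) by (intro torsion_cong_interval)
  moreover have "curvature c (- s) \<noteq> 0"
    using assms curvature_mirror by simp
  ultimately show ?thesis
    by (simp add: torsion_reflect[OF smooth] torsion_rigid_motion[OF smooth orth assms(2)])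
qed

end

section \<open>Angular functions and rulings\<close>

lemma arccot_minus: "arccot (- x) = pi - arccot x"
  unfolding arccot_def by (simp add: arctan_minus)

text \<open>Reversing the tangent (\<open>\<epsilon> = -1\<close>) replaces the second angular function \<open>\<beta>\<close> by
  \<open>pi - \<beta>\<close>; reversing the binormal (\<open>\<delta> = -1\<close>) is absorbed by the sign of the first one.\<close>

lemma ruling_linear_image:
  assumes L: "linear L" and signs: "\<epsilon> \<in> {-1, 1}" "\<delta> \<in> {-1, 1}"
    and frame: "L (tangent c t) = \<epsilon> *\<^sub>R tangent d s"
      "L (principal_normal c t) = principal_normal d s"
      "L (binormal c t) = \<delta> *\<^sub>R binormal d s"
    and curv: "curvature d s = curvature c t" "torsion d s = \<epsilon> * \<delta> * torsion c t"
    and angle: "\<gamma> s = \<delta> * \<alpha> t" "vd \<gamma> s = \<epsilon> * \<delta> * vd \<alpha> t"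
  shows "L (ruling c \<alpha> t) = ruling d \<gamma> s"
proof -
  define x where "x = (vd \<alpha> t + torsion c t) / (curvature c t * sin (\<alpha> t))"
  have cos_angle: "cos (\<gamma> s) = cos (\<alpha> t)" and sin_angle: "sin (\<gamma> s) = \<delta> * sin (\<alpha> t)"
    using signs(2) unfolding angle by auto
  have "(vd \<gamma> s + torsion d s) / (curvature d s * sin (\<gamma> s)) = \<epsilon> * x"
    using signs(2) unfolding x_def curv sin_angle angle(2)
    by (auto simp: distrib_left[symmetric] minus_divide_right)
  then have "beta_fn d \<gamma> s = (if \<epsilon> = 1 then beta_fn c \<alpha> t else pi - beta_fn c \<alpha> t)"
    using signs(1) unfolding beta_fn_def x_def[symmetric] by (auto simp: arccot_minus)
  then have "cos (beta_fn d \<gamma> s) = \<epsilon> * cos (beta_fn c \<alpha> t)"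
    and "sin (beta_fn d \<gamma> s) = sin (beta_fn c \<alpha> t)"
    using signs(1) by auto
  then show ?thesis
    using signs(2) cos_angle sin_angle
    unfolding ruling_def frame linear_add[OF L] linear_cmul[OF L] by auto
qed

lemma continuous_on_nonzero_same_sign:
  fixes f :: "real \<Rightarrow> real"
  assumes "continuous_on {a..b} f" "\<And>x. x \<in> {a..b} \<Longrightarrow> f x \<noteq> 0"
    and "x \<in> {a..b}" "y \<in> {a..b}"
  shows "0 < f x \<longleftrightarrow> 0 < f y"
proof -
  have conn: "connected (f ` {a..b})"
    using connected_continuous_image[OF assms(1)] by simp
  have "0 \<notin> {u..v}" if "u \<in> f ` {a..b}" "v \<in> f ` {a..b}" for u v
    using connected_contains_Icc[OF conn that] assms(2) by fastforce
  from this[of "f x" "f y"] this[of "f y" "f x"] show ?thesis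
    using assms(3,4) by (cases "0 < f x") auto
qed

lemma cos_eq_same_sign_imp_eq:
  fixes x y :: real
  assumes "\<bar>x\<bar> \<le> pi" "\<bar>y\<bar> \<le> pi" "cos x = cos y" "0 < x \<longleftrightarrow> 0 < y"
  shows "x = y"
proof -
  have "\<bar>x\<bar> = \<bar>y\<bar>"
    using arccos_cos_eq_abs[OF assms(1)] arccos_cos_eq_abs[OF assms(2)] assms(3) by simp
  then show ?thesis
    using assms(4) by (auto simp: abs_if split: if_splits)
qed

lemma alpha_inv_eq:
  assumes "curvature c (- s) = curvature c s" "curvature c s \<noteq> 0" "\<bar>\<alpha> s\<bar> \<le> pi"
  shows "alpha_inv c \<alpha> s = \<alpha> s"
  using assms by (simp add: alpha_inv_def arccos_cos_eq_abs sgn_mult_abs)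

lemma alpha_inv_differentiable:
  assumes "smooth_fn c" "smooth_fn \<alpha>" "curvature c s \<noteq> 0" "curvature c (- s) \<noteq> 0"
    and "\<alpha> s \<noteq> 0" "\<bar>curvature c s * cos (\<alpha> s) / curvature c (- s)\<bar> < 1"
  shows "alpha_inv c \<alpha> differentiable (at s)"
proof -
  define h where "h t = curvature c t * cos (\<alpha> t) / curvature c (- t)" for t
  have "cos differentiable (at (\<alpha> s))"
    using DERIV_cos unfolding real_differentiable_def by blast
  then have "(\<lambda>t. cos (\<alpha> t)) differentiable (at s)"
    by (rule differentiable_compose[OF _ smooth_fn_differentiable[OF assms(2)]])
  then have "h differentiable (at s)"
    unfolding h_def[abs_def]
    by (intro differentiable_divide differentiable_mult assms(4)
        curvature_differentiable[OF assms(1,3)]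
        differentiable_reflect[OF curvature_differentiable[OF assms(1,4)]])
  moreover have "arccos differentiable (at (h s))"
  proof -
    have "- 1 < h s" "h s < 1"
      using assms(6) unfolding h_def by linarith+
    then show ?thesis
      using DERIV_arccos unfolding real_differentiable_def by blast
  qed
  ultimately have "(\<lambda>t. sgn (\<alpha> s) * arccos (h t)) differentiable (at s)"
    by (intro differentiable_mult differentiable_const differentiable_compose[of arccos h])
  then obtain D where D: "((\<lambda>t. sgn (\<alpha> s) * arccos (h t)) has_derivative D) (at s)"
    unfolding differentiable_def by blast
  have "open {t. 0 < sgn (\<alpha> s) * \<alpha> t}"
    using smooth_fn_continuous_on[OF assms(2)]
    by (intro open_Collect_less continuous_on_const continuous_on_mult)
  moreover have "sgn (\<alpha> s) * arccos (h t) = alpha_inv c \<alpha> t" if "0 < sgn (\<alpha> s) * \<alpha> t" for t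
    using that unfolding alpha_inv_def h_def by (cases "0 < \<alpha> s") (auto simp: sgn_if)
  moreover have "0 < sgn (\<alpha> s) * \<alpha> s"
    using assms(5) by (simp add: sgn_if)
  ultimately have "(alpha_inv c \<alpha> has_derivative D) (at s)"
    by (intro has_derivative_transform_within_open[OF D]) auto
  then show ?thesis
    unfolding differentiable_def by blast
qed

section \<open>Symmetries of an arc\<close>

lemma chord_ratio_tendsto:
  fixes c :: "real \<Rightarrow> 'a::real_normed_vector"
  assumes "(c has_vector_derivative w) (at t)" "norm w = 1"
  shows "((\<lambda>y. norm (c y - c t) / \<bar>y - t\<bar>) \<longlongrightarrow> 1) (at t)"
proof -
  define e where "e y = norm ((c y - c t) - (y - t) *\<^sub>R w) / \<bar>y - t\<bar>" for y
  have e: "(e \<longlongrightarrow> 0) (at t)"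
    using assms(1) unfolding has_vector_derivative_def has_derivative_iff_norm e_def by simp
  have bound: "norm (norm (c y - c t) / \<bar>y - t\<bar> - 1) \<le> e y" if "y \<noteq> t" for y
  proof -
    have "norm (c y - c t) / \<bar>y - t\<bar> - 1 = (norm (c y - c t) - \<bar>y - t\<bar>) / \<bar>y - t\<bar>"
      using that by (simp add: diff_divide_distrib)
    then have "norm (norm (c y - c t) / \<bar>y - t\<bar> - 1) = \<bar>norm (c y - c t) - \<bar>y - t\<bar>\<bar> / \<bar>y - t\<bar>"
      by (simp only: real_norm_def abs_divide abs_abs)
    also have "\<dots> \<le> e y"
      unfolding e_def using norm_triangle_ineq3[of "c y - c t" "(y - t) *\<^sub>R w"] assms(2)
      by (intro divide_right_mono) simp_all
    finally show ?thesis .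
  qed
  have "\<forall>\<^sub>F y in at t. norm (norm (c y - c t) / \<bar>y - t\<bar> - 1) \<le> e y"
    unfolding eventually_at_filter by (rule always_eventually) (use bound in blast)
  then have "((\<lambda>y. norm (c y - c t) / \<bar>y - t\<bar> - 1) \<longlongrightarrow> 0) (at t)"
    using e by (rule Lim_null_comparison)
  then show ?thesis
    by (simp add: Lim_null[symmetric])
qed

lemma chord_preserving_reparametrization_ratio_tendsto:
  fixes c :: "real \<Rightarrow> 'a::real_normed_vector" and \<phi> :: "real \<Rightarrow> real"
  assumes "(c has_vector_derivative w) (at s)" "norm w = 1"
    and "(c has_vector_derivative u) (at (\<phi> s))" "norm u = 1"
    and "(\<phi> \<longlongrightarrow> \<phi> s) (at s within I)"
    and "\<And>y. y \<in> I \<Longrightarrow> y \<noteq> s \<Longrightarrow> \<phi> y \<noteq> \<phi> s \<and> c y \<noteq> c s"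
    and "\<And>y. y \<in> I \<Longrightarrow> norm (c (\<phi> y) - c (\<phi> s)) = norm (c y - c s)"
  shows "((\<lambda>y. \<bar>\<phi> y - \<phi> s\<bar> / \<bar>y - s\<bar>) \<longlongrightarrow> 1) (at s within I)"
proof -
  have "\<forall>\<^sub>F y in at s within I. \<phi> y \<noteq> \<phi> s"
    unfolding eventually_at_filter by (rule always_eventually) (use assms(6) in blast)
  then have "filterlim \<phi> (at (\<phi> s)) (at s within I)"
    by (rule filterlim_atI[OF assms(5)])
  then have "((\<lambda>y. norm (c (\<phi> y) - c (\<phi> s)) / \<bar>\<phi> y - \<phi> s\<bar>) \<longlongrightarrow> 1) (at s within I)"
    by (rule filterlim_compose[OF chord_ratio_tendsto[OF assms(3,4)]])
  moreover have "((\<lambda>y. norm (c y - c s) / \<bar>y - s\<bar>) \<longlongrightarrow> 1) (at s within I)"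
    by (rule tendsto_mono[OF at_le chord_ratio_tendsto[OF assms(1,2)]]) simp
  ultimately have "((\<lambda>y. (norm (c y - c s) / \<bar>y - s\<bar>)
      / (norm (c (\<phi> y) - c (\<phi> s)) / \<bar>\<phi> y - \<phi> s\<bar>)) \<longlongrightarrow> 1) (at s within I)"
    using tendsto_divide by fastforce
  moreover have "\<forall>\<^sub>F y in at s within I. (norm (c y - c s) / \<bar>y - s\<bar>)
      / (norm (c (\<phi> y) - c (\<phi> s)) / \<bar>\<phi> y - \<phi> s\<bar>) = \<bar>\<phi> y - \<phi> s\<bar> / \<bar>y - s\<bar>"
    unfolding eventually_at_filter using assms(6,7) by (intro always_eventually) auto
  ultimately show ?thesis
    by (rule Lim_transform_eventually)
qed

lemma continuous_inj_on_interval_sgn_diff: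
  fixes f :: "real \<Rightarrow> real"
  assumes cont: "continuous_on {a..b} f" and inj: "inj_on f {a..b}"
    and xy: "x \<in> {a..b}" "y \<in> {a..b}" "x < y"
  shows "sgn (f y - f x) = sgn (f b - f a)"
proof -
  define p where "p t = (1 - t) * a + t * x" for t
  define q where "q t = (1 - t) * b + t * y" for t
  have pq: "p t \<in> {a..b}" "q t \<in> {a..b}" "p t < q t" if "t \<in> {0..1}" for t
  proof -
    have "(1 - t) * a \<le> (1 - t) * x" "t * a \<le> t * x" "(1 - t) * y \<le> (1 - t) * b" "t * y \<le> t * b"
      "(1 - t) * a \<le> (1 - t) * b" "t * x < t * y \<or> (t = 0 \<and> a < b)"
      using that xy by (auto intro: mult_left_mono)
    then show "p t \<in> {a..b}" "q t \<in> {a..b}" "p t < q t"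
      using that xy unfolding p_def q_def by (auto simp: algebra_simps)
  qed
  have "continuous_on {0..1} (\<lambda>t. f (q t) - f (p t))"
    unfolding p_def q_def using pq
    by (intro continuous_intros continuous_on_compose2[OF cont]) (auto simp: p_def q_def)
  moreover have nonzero: "f (q t) - f (p t) \<noteq> 0" if "t \<in> {0..1}" for t
    using pq[OF that] inj_onD[OF inj] by force
  ultimately have "0 < f (q 1) - f (p 1) \<longleftrightarrow> 0 < f (q 0) - f (p 0)"
    by (rule continuous_on_nonzero_same_sign) auto
  then show ?thesis
    using nonzero[of 0] nonzero[of 1] unfolding p_def q_def by (auto simp: sgn_if)
qed

lemma interval_self_map_unit_ratio_cases:
  fixes \<phi> :: "real \<Rightarrow> real"
  assumes ab: "a < b" and into: "\<phi> ` {a..b} \<subseteq> {a..b}"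
    and cont: "continuous_on {a..b} \<phi>" and inj: "inj_on \<phi> {a..b}"
    and ratio: "\<And>s. s \<in> {a..b} \<Longrightarrow> ((\<lambda>y. \<bar>\<phi> y - \<phi> s\<bar> / \<bar>y - s\<bar>) \<longlongrightarrow> 1) (at s within {a..b})"
  shows "(\<forall>s\<in>{a..b}. \<phi> s = s) \<or> (\<forall>s\<in>{a..b}. \<phi> s = a + b - s)"
proof -
  define \<sigma> where "\<sigma> = sgn (\<phi> b - \<phi> a)"
  have \<sigma>: "\<sigma> = 1 \<or> \<sigma> = -1"
    using inj_onD[OF inj, of a b] ab unfolding \<sigma>_def by (auto simp: sgn_if)
  have quotient: "(\<phi> y - \<phi> s) / (y - s) = \<sigma> * (\<bar>\<phi> y - \<phi> s\<bar> / \<bar>y - s\<bar>)"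
    if "s \<in> {a..b}" "y \<in> {a..b}" "y \<noteq> s" for s y
  proof -
    have "(\<phi> y - \<phi> s) / (y - s) = (\<phi> (max s y) - \<phi> (min s y)) / (max s y - min s y)"
      using that(3) by (cases "s < y") (auto simp: field_simps)
    moreover have "sgn (\<phi> (max s y) - \<phi> (min s y)) = \<sigma>"
      unfolding \<sigma>_def using that
      by (intro continuous_inj_on_interval_sgn_diff[OF cont inj]) (auto simp: min_def max_def)
    moreover have "0 < max s y - min s y"
      using that(3) by (auto simp: min_def max_def)
    ultimately have "sgn ((\<phi> y - \<phi> s) / (y - s)) = \<sigma>"
      by simp
    then show ?thesis
      by (metis abs_divide sgn_mult_abs)
  qed
  have "(\<phi> has_field_derivative \<sigma>) (at s within {a..b})" if s: "s \<in> {a..b}" for s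
  proof -
    have "\<forall>\<^sub>F y in at s within {a..b}. \<sigma> * (\<bar>\<phi> y - \<phi> s\<bar> / \<bar>y - s\<bar>) = (\<phi> y - \<phi> s) / (y - s)"
      unfolding eventually_at_filter by (rule always_eventually) (use quotient s in auto)
    with tendsto_mult_left[OF ratio[OF s], of \<sigma>] show ?thesis
      unfolding has_field_derivative_iff by (simp add: Lim_transform_eventually)
  qed
  then have "((\<lambda>x. \<phi> x - \<sigma> * x) has_field_derivative 0) (at s within {a..b})"
    if "s \<in> {a..b}" for s
    using that by (auto intro!: derivative_eq_intros)
  then obtain K where K: "\<And>x. x \<in> {a..b} \<Longrightarrow> \<phi> x - \<sigma> * x = K"
    using has_field_derivative_zero_constant[OF convex_real_interval(5)] by metis
  have "\<phi> a \<in> {a..b}" "\<phi> b \<in> {a..b}"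
    using into ab by (auto simp: image_subset_iff)
  then show ?thesis
    using \<sigma> K[of a] K[of b] K ab by (auto simp: algebra_simps)
qed

lemma isometry3_linear_part: "isometry3 T \<Longrightarrow> orthogonal_transformation (\<lambda>x. T x - T 0)"
  unfolding orthogonal_transformation_isometry isometry3_def by (simp add: dist_norm)

lemma arc_isometry_identity_or_reversal:
  fixes c :: "real \<Rightarrow> real^3"
  assumes ab: "a < b" and smooth: "smooth_fn c" and inj: "inj_on c {a..b}"
    and unit: "\<And>s. s \<in> {a..b} \<Longrightarrow> norm (vd c s) = 1"
    and iso: "isometry3 T" and onto: "T ` c ` {a..b} = c ` {a..b}"
  shows "(\<forall>s\<in>{a..b}. T (c s) = c s) \<or> (\<forall>s\<in>{a..b}. T (c s) = c (a + b - s))"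
proof -
  define \<phi> where "\<phi> s = the_inv_into {a..b} c (T (c s))" for s
  have T_arc: "T (c s) \<in> c ` {a..b}" if "s \<in> {a..b}" for s
    using onto that by blast
  have into: "\<phi> s \<in> {a..b}" and c_\<phi>: "c (\<phi> s) = T (c s)" if "s \<in> {a..b}" for s
    unfolding \<phi>_def
    by (rule the_inv_into_into[OF inj T_arc[OF that] order_refl],
        rule f_the_inv_into_f[OF inj T_arc[OF that]])
  have dist_T: "dist (T x) (T y) = dist x y" for x y
    using iso unfolding isometry3_def by blast
  have "continuous_on UNIV T"
    by (rule lipschitz_on_continuous_on[of 1]) (simp add: lipschitz_on_def dist_T)
  then have "continuous_on {a..b} (\<lambda>s. T (c s))"
    by (rule continuous_on_compose2[OF _ smooth_fn_continuous_on[OF smooth]]) simp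
  then have cont: "continuous_on {a..b} \<phi>"
    unfolding \<phi>_def
    by (rule continuous_on_compose2[OF continuous_on_inv_into[OF smooth_fn_continuous_on[OF smooth]
          compact_Icc inj]]) (use T_arc in blast)
  have inj_\<phi>: "inj_on \<phi> {a..b}"
  proof (rule inj_onI)
    fix x y
    assume "x \<in> {a..b}" "y \<in> {a..b}" "\<phi> x = \<phi> y"
    then have "T (c x) = T (c y)"
      using c_\<phi> by metis
    then have "dist (c x) (c y) = 0"
      using dist_T[of "c x" "c y"] by simp
    then show "x = y"
      using inj_onD[OF inj] \<open>x \<in> {a..b}\<close> \<open>y \<in> {a..b}\<close> by simp
  qed
  have "((\<lambda>y. \<bar>\<phi> y - \<phi> s\<bar> / \<bar>y - s\<bar>) \<longlongrightarrow> 1) (at s within {a..b})" if s: "s \<in> {a..b}" for s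
  proof (rule chord_preserving_reparametrization_ratio_tendsto)
    show "(c has_vector_derivative vd c s) (at s)" "(c has_vector_derivative vd c (\<phi> s)) (at (\<phi> s))"
      using smooth by (simp_all add: has_vector_derivative_vd smooth_fn_differentiable)
    show "norm (vd c s) = 1" "norm (vd c (\<phi> s)) = 1"
      using unit s into by auto
    show "(\<phi> \<longlongrightarrow> \<phi> s) (at s within {a..b})"
      using cont s by (simp add: continuous_on_eq_continuous_within continuous_within)
    show "\<phi> y \<noteq> \<phi> s \<and> c y \<noteq> c s" if "y \<in> {a..b}" "y \<noteq> s" for y
      using that s inj_onD[OF inj_\<phi>] inj_onD[OF inj] by blast
    show "norm (c (\<phi> y) - c (\<phi> s)) = norm (c y - c s)" if "y \<in> {a..b}" for y
      using that s c_\<phi> dist_T by (simp add: dist_norm)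
  qed
  then have "(\<forall>s\<in>{a..b}. \<phi> s = s) \<or> (\<forall>s\<in>{a..b}. \<phi> s = a + b - s)"
    using into by (intro interval_self_map_unit_ratio_cases[OF ab _ cont inj_\<phi>]) auto
  then show ?thesis
    using c_\<phi> by auto
qed

lemma symmetry_reverses_arc:
  assumes curve: "arclength_curve l c" and sym: "nontrivial_symmetry T (c ` interv l)"
    and s: "s \<in> interv l"
  shows "T (c s) = c (- s)"
proof -
  have "l > 0" "smooth_fn c" "inj_on c {-l/2..l/2}" "\<And>s. s \<in> {-l/2..l/2} \<Longrightarrow> norm (vd c s) = 1"
    using curve unfolding arclength_curve_def interv_def by auto
  moreover have "isometry3 T" "T ` c ` {-l/2..l/2} = c ` {-l/2..l/2}"
    and nontrivial: "\<exists>x\<in>c ` {-l/2..l/2}. T x \<noteq> x"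
    using sym unfolding nontrivial_symmetry_def symmetry_of_def interv_def by auto
  ultimately have "\<forall>s\<in>{-l/2..l/2}. T (c s) = c (- l/2 + l/2 - s)"
    using arc_isometry_identity_or_reversal[of "-l/2" "l/2" c T] by auto
  then show ?thesis
    using s unfolding interv_def by simp
qed

section \<open>Normal forms under a symmetry\<close>

locale curve_symmetry =
  fixes l :: real and c :: "real \<Rightarrow> real^3" and \<alpha> :: "real \<Rightarrow> real"
    and T :: "real^3 \<Rightarrow> real^3"
  assumes curve: "arclength_curve l c"
    and adm: "admissible_angle l c \<alpha>"
    and sym: "nontrivial_symmetry T (c ` interv l)"
begin

definition linear_part :: "real^3 \<Rightarrow> real^3" where
  "linear_part x = T x - T 0"

definition orientation :: real where
  "orientation = det (matrix linear_part)"

lemma interv_eq: "interv l = {- (l / 2)..l / 2}"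
  unfolding interv_def by simp

lemma interv_uminus: "s \<in> interv l \<Longrightarrow> - s \<in> interv l"
  unfolding interv_def by auto

lemma interv_nondegenerate: "- (l / 2) < l / 2"
  using curve unfolding arclength_curve_def by simp

lemma smooth: "smooth_fn c"
  using curve unfolding arclength_curve_def by simp

lemma curvature_nonzero: "s \<in> interv l \<Longrightarrow> curvature c s \<noteq> 0"
  using curve unfolding arclength_curve_def by simp

lemma smooth_angle: "smooth_fn \<alpha>"
  using adm unfolding admissible_angle_def by simp

lemma angle_range: "s \<in> interv l \<Longrightarrow> \<alpha> s \<noteq> 0 \<and> \<bar>\<alpha> s\<bar> < pi / 2"
  using adm unfolding admissible_angle_def by auto

lemma orthogonal_linear_part: "orthogonal_transformation linear_part"
  using sym isometry3_linear_part
  unfolding nontrivial_symmetry_def symmetry_of_def linear_part_def[abs_def] by blast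

lemma linear_linear_part: "linear linear_part"
  using orthogonal_linear_part by (rule orthogonal_transformation_linear)

lemma orientation_cases: "orientation = 1 \<or> orientation = -1"
  using orthogonal_transformation_det[OF orthogonal_linear_part]
  unfolding orientation_def by linarith

lemma T_eq: "T x = linear_part x + T 0"
  unfolding linear_part_def by simp

lemma mirror: "s \<in> {- (l / 2)..l / 2} \<Longrightarrow> c (- s) = linear_part (c s) + T 0"
  using symmetry_reverses_arc[OF curve sym] T_eq unfolding interv_eq by metis

lemma T_normal_form:
  "T (normal_form c \<gamma> t v) = linear_part (c t) + T 0 + v *\<^sub>R linear_part (ruling c \<gamma> t)"
  unfolding normal_form_def T_eq[of "c t + v *\<^sub>R ruling c \<gamma> t"]
  by (simp add: linear_add[OF linear_linear_part] linear_cmul[OF linear_linear_part])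

lemma frame_mirror:
  assumes "s \<in> interv l"
  shows "tangent c (- s) = - linear_part (tangent c s)"
    and "principal_normal c (- s) = linear_part (principal_normal c s)"
    and "binormal c (- s) = - orientation *\<^sub>R linear_part (binormal c s)"
    and "curvature c (- s) = curvature c s"
    and "torsion c (- s) = orientation * torsion c s"
proof -
  have s: "s \<in> {- (l / 2)..l / 2}"
    using assms unfolding interv_eq .
  note mirror_at = smooth orthogonal_linear_part interv_nondegenerate mirror s
  show "tangent c (- s) = - linear_part (tangent c s)"
    by (rule tangent_mirror[where c = c and L = linear_part and p = "T 0", OF mirror_at])
  show "principal_normal c (- s) = linear_part (principal_normal c s)"
    by (rule principal_normal_mirror[where c = c and L = linear_part and p = "T 0",
          OF mirror_at])
  show "binormal c (- s) = - orientation *\<^sub>R linear_part (binormal c s)"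
    unfolding orientation_def
    by (rule binormal_mirror[where c = c and L = linear_part and p = "T 0", OF mirror_at])
  show "curvature c (- s) = curvature c s"
    by (rule curvature_mirror[where c = c and L = linear_part and p = "T 0", OF mirror_at])
  show "torsion c (- s) = orientation * torsion c s"
    unfolding orientation_def
    by (rule torsion_mirror[where c = c and L = linear_part and p = "T 0",
          OF mirror_at curvature_nonzero[OF assms]])
qed

lemma cos_angle_bounds: "s \<in> interv l \<Longrightarrow> 0 < cos (\<alpha> s) \<and> cos (\<alpha> s) < 1"
  using angle_range cos_gt_zero_pi cos_monotone_0_pi[of 0 "\<bar>\<alpha> s\<bar>"] by force

lemma angle_abs_le_pi: "s \<in> interv l \<Longrightarrow> \<bar>\<alpha> s\<bar> \<le> pi"
  using angle_range[of s] pi_gt_zero by linarith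

lemma alpha_inv_on_interv: "s \<in> interv l \<Longrightarrow> alpha_inv c \<alpha> s = \<alpha> s"
  using alpha_inv_eq frame_mirror(4) curvature_nonzero angle_abs_le_pi by blast

lemma vd_alpha_inv:
  assumes "s \<in> interv l"
  shows "vd (\<lambda>t. r * alpha_inv c \<alpha> t) s = r * vd \<alpha> s"
proof -
  have "\<bar>curvature c s * cos (\<alpha> s) / curvature c (- s)\<bar> < 1"
    using frame_mirror(4)[OF assms] curvature_nonzero[OF assms] cos_angle_bounds[OF assms] by simp
  then have "alpha_inv c \<alpha> differentiable (at s)"
    using assms angle_range
    by (intro alpha_inv_differentiable smooth smooth_angle curvature_nonzero interv_uminus) auto
  moreover have "vd (alpha_inv c \<alpha>) s = vd \<alpha> s"
    using assms alpha_inv_on_interv unfolding interv_eq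
    by (intro vd_cong_interval[OF calculation smooth_fn_differentiable[OF smooth_angle]
          interv_nondegenerate]) auto
  ultimately show ?thesis
    using vd_scaleR_right[of "alpha_inv c \<alpha>" s r] by simp
qed

lemma normal_form_image:
  assumes s: "s \<in> interv l"
  shows "T (normal_form c \<alpha> s v)
    = normal_form (\<lambda>t. c (- t)) (\<lambda>t. orientation * alpha_inv c \<alpha> t) s v"
proof -
  have "linear_part (ruling c \<alpha> s) = ruling (\<lambda>t. c (- t)) (\<lambda>t. orientation * alpha_inv c \<alpha> t) s"
  proof (rule ruling_linear_image[OF linear_linear_part, of 1 orientation])
    show "(1::real) \<in> {-1, 1}" "orientation \<in> {-1, 1}"
      using orientation_cases by auto
    show "linear_part (tangent c s) = 1 *\<^sub>R tangent (\<lambda>t. c (- t)) s"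
      using frame_mirror(1)[OF s] by (simp add: tangent_reflect[OF smooth])
    show "linear_part (principal_normal c s) = principal_normal (\<lambda>t. c (- t)) s"
      using frame_mirror(2)[OF s] by (simp add: principal_normal_reflect[OF smooth])
    show "linear_part (binormal c s) = orientation *\<^sub>R binormal (\<lambda>t. c (- t)) s"
      using frame_mirror(3)[OF s] orientation_cases by (auto simp: binormal_reflect[OF smooth])
    show "curvature (\<lambda>t. c (- t)) s = curvature c s"
      using frame_mirror(4)[OF s] by (simp add: curvature_reflect[OF smooth])
    show "torsion (\<lambda>t. c (- t)) s = 1 * orientation * torsion c s"
      using frame_mirror(5)[OF s]
      by (simp add: torsion_reflect[OF smooth curvature_nonzero[OF interv_uminus[OF s]]])
    show "orientation * alpha_inv c \<alpha> s = orientation * \<alpha> s"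
      using alpha_inv_on_interv[OF s] by simp
    show "vd (\<lambda>t. orientation * alpha_inv c \<alpha> t) s = 1 * orientation * vd \<alpha> s"
      using vd_alpha_inv[OF s] by simp
  qed
  then show ?thesis
    using mirror[of s] s unfolding interv_eq T_normal_form by (simp add: normal_form_def)
qed

context
  assumes geodesic_curvature_even: "has_symmetry l (geod_curv c \<alpha>)"
begin

lemma angle_even:
  assumes "s \<in> interv l"
  shows "\<alpha> (- s) = \<alpha> s"
proof (rule cos_eq_same_sign_imp_eq)
  show "cos (\<alpha> (- s)) = cos (\<alpha> s)"
    using geodesic_curvature_even assms frame_mirror(4)[OF assms] curvature_nonzero[OF assms]
    unfolding has_symmetry_def geod_curv_def by auto
  show "0 < \<alpha> (- s) \<longleftrightarrow> 0 < \<alpha> s"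
    using interv_uminus[OF assms] assms angle_range unfolding interv_eq
    by (intro continuous_on_nonzero_same_sign[of "- (l / 2)" "l / 2" \<alpha> "- s" s]
        smooth_fn_continuous_on[OF smooth_angle]) auto
  show "\<bar>\<alpha> (- s)\<bar> \<le> pi" "\<bar>\<alpha> s\<bar> \<le> pi"
    using angle_abs_le_pi assms interv_uminus by blast+
qed

lemma vd_angle_odd:
  assumes "s \<in> interv l"
  shows "vd \<alpha> (- s) = - vd \<alpha> s"
proof -
  have "vd (\<lambda>t. \<alpha> (- t)) s = vd \<alpha> s"
    using assms angle_even unfolding interv_eq
    by (intro vd_cong_interval[OF differentiable_reflect smooth_fn_differentiable
          interv_nondegenerate]
        smooth_fn_differentiable smooth_angle) auto
  then show ?thesis
    using vd_reflect[OF smooth_fn_differentiable[OF smooth_angle]] by (metis minus_minus)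
qed

lemma normal_form_image_reflected:
  assumes s: "s \<in> interv l"
  shows "T (normal_form c \<alpha> (- s) v) = normal_form c (\<lambda>t. - orientation * \<alpha> t) s v"
proof -
  have ms: "- s \<in> interv l"
    using interv_uminus[OF s] .
  have "linear_part (ruling c \<alpha> (- s)) = ruling c (\<lambda>t. - orientation * \<alpha> t) s"
  proof (rule ruling_linear_image[OF linear_linear_part, of "-1" "- orientation"])
    show "(-1::real) \<in> {-1, 1}" "- orientation \<in> {-1, 1}"
      using orientation_cases by auto
    show "linear_part (tangent c (- s)) = -1 *\<^sub>R tangent c s"
      using frame_mirror(1)[OF ms] by simp
    show "linear_part (principal_normal c (- s)) = principal_normal c s"
      using frame_mirror(2)[OF ms] by simp
    show "linear_part (binormal c (- s)) = - orientation *\<^sub>R binormal c s"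
      using frame_mirror(3)[OF ms] orientation_cases by auto
    show "curvature c s = curvature c (- s)"
      using frame_mirror(4)[OF s] by simp
    show "torsion c s = -1 * - orientation * torsion c (- s)"
      using frame_mirror(5)[OF ms] by simp
    show "- orientation * \<alpha> s = - orientation * \<alpha> (- s)"
      using angle_even[OF s] by simp
    show "vd (\<lambda>t. - orientation * \<alpha> t) s = -1 * - orientation * vd \<alpha> (- s)"
      using vd_scaleR_right[OF smooth_fn_differentiable[OF smooth_angle], where r = "- orientation"]
        vd_angle_odd[OF s] by simp
  qed
  then show ?thesis
    using mirror[of "- s"] ms unfolding interv_eq T_normal_form by (simp add: normal_form_def)
qed

end

end

theorem theorem4p2:
  fixes l :: real and c :: "real \<Rightarrow> real^3" and \<alpha> :: "real \<Rightarrow> real"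
    and T :: "real^3 \<Rightarrow> real^3"
  assumes curve: "arclength_curve l c"
    and adm: "admissible_angle l c \<alpha>"
    and sym: "nontrivial_symmetry T (c ` interv l)"
  shows "(positive_isom T \<longrightarrow>
            (\<forall>s\<in>interv l. \<forall>v. T (normal_form c \<alpha> s v) = inverse_nf c \<alpha> s v)
          \<and> (has_symmetry l (geod_curv c \<alpha>) \<longrightarrow>
               (\<forall>s\<in>interv l. \<forall>v. T (normal_form c \<alpha> (-s) v) = dual_nf c \<alpha> s v)))
       \<and> (negative_isom T \<longrightarrow>
            (\<forall>s\<in>interv l. \<forall>v. T (normal_form c \<alpha> s v) = inverse_dual_nf c \<alpha> s v)
          \<and> (has_symmetry l (geod_curv c \<alpha>) \<longrightarrow>
               (\<forall>s\<in>interv l. \<forall>v. T (normal_form c \<alpha> (-s) v) = normal_form c \<alpha> s v)))"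
proof -
  interpret curve_symmetry l c \<alpha> T
    using assms by unfold_locales
  have "positive_isom T \<longleftrightarrow> orientation = 1" "negative_isom T \<longleftrightarrow> orientation = -1"
    using orientation_cases
    unfolding positive_isom_def negative_isom_def orientation_def linear_part_def[abs_def] by auto
  then show ?thesis
    using normal_form_image normal_form_image_reflected
    by (auto simp: inverse_nf_def inverse_dual_nf_def dual_nf_def)
qed

end
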